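(* Let $k\ge1$ and $n\ge0$. The map $\psi$ from $\mathcal{A}^k_n$ to the set $\overline{\mathcal{Q}}^k_n$ of $k$-quasi-Stirling permutations of size $n$, defined recursively by letting $\psi$ of a tree consisting of a single leaf be the empty sequence, and, for a tree whose root is an internal vertex with label $b$ and whose root subtrees from left to right are $S_1,\dots,S_k$, $$\psi(T)=\psi(S_1)\,b\,\psi(S_2)\,b\cdots\psi(S_k)\,b$$ (i.e. a left-to-right depth-first walk recording the label of a vertex each time the walk returns to it from a child), is well defined (its values lie in $\overline{\mathcal{Q}}^k_n$) and is a bijection $\mathcal{A}^k_n\to\overline{\mathcal{Q}}^k_n$.
   Context: A $k$-ary tree is a plane (ordered) rooted tree in which every vertex has either $0$ or $k$ children; vertices with $k$ children are internal. $\mathcal{A}^k_n$ is the set of $k$-ary trees with $n$ internal vertices whose internal vertices are labeled bijectively by $\{1,\dots,n\}$ (leaves are unlabeled). A $k$-quasi-Stirling permutation of size $n$ is a permutation $\pi$ of the multiset $\{1^k,2^k,\dots,n^k\}$ (each of $1,\dots,n$ appearing $k$ times) that avoids $1212$ and $2121$, i.e. there are no indices $i<j<k'<\ell$ with $\pi_i=\pi_{k'}\neq\pi_j=\pi_\ell$. *)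

theory Defs
  imports Main "HOL-Library.Multiset"
begin

datatype ktree = Leaf | Node nat "ktree list"

fun is_kary :: "nat \<Rightarrow> ktree \<Rightarrow> bool" where
  "is_kary k Leaf = True"
| "is_kary k (Node b ts) = (length ts = k \<and> (\<forall>t\<in>set ts. is_kary k t))"

fun labels :: "ktree \<Rightarrow> nat list" where
  "labels Leaf = []"
| "labels (Node b ts) = b # concat (map labels ts)"

definition labeled_kary_trees :: "nat \<Rightarrow> nat \<Rightarrow> ktree set" where
  "labeled_kary_trees k n =
     {T. is_kary k T \<and> distinct (labels T) \<and> set (labels T) = {1..n}}"

definition quasi_stirling :: "nat \<Rightarrow> nat \<Rightarrow> nat list set" where
  "quasi_stirling k n =
     {w. (\<forall>a. count (mset w) a = (if 1 \<le> a \<and> a \<le> n then k else 0)) \<and>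
         \<not> (\<exists>i j l m. i < j \<and> j < l \<and> l < m \<and> m < length w \<and>
                w ! i = w ! l \<and> w ! j = w ! m \<and> w ! i \<noteq> w ! j)}"

fun psi :: "ktree \<Rightarrow> nat list" where
  "psi Leaf = []"
| "psi (Node b ts) = concat (map (\<lambda>t. psi t @ [b]) ts)"

end

theory Submission
  imports Defs "HOL-Library.Sublist"
begin

text \<open>
  For a tree with root label b and subtrees S1, ..., Sk, the word psi T = psi S1 b ... psi Sk b
  ends in b, and the k occurrences of b cut it into the words psi Si, whose alphabets are
  pairwise disjoint and do not contain b. So b and the psi Si can be read off psi T, which gives
  injectivity by induction. A pattern a c a c in psi T cannot sit inside one psi Si (induction),
  cannot have a and c in different blocks (disjoint alphabets), and cannot use b, because every
  other letter lies in a single block, so no c b c occurs.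

  Conversely, let w be quasi-Stirling with last letter b. The k occurrences of b cut w into k
  blocks. A letter a occurring in two blocks would give a b a b, the second b being the final
  letter of w; hence the blocks have disjoint alphabets, each of them is again quasi-Stirling,
  and induction on the length rebuilds the subtrees.
\<close>

lemma count_mset_concat: "count (mset (concat xss)) a = (\<Sum>xs\<leftarrow>xss. count (mset xs) a)"
  by (induct xss) auto

lemma distinct_concat_iff_sorted_wrt:
  "distinct (concat xss) \<longleftrightarrow>
     (\<forall>xs\<in>set xss. distinct xs) \<and> sorted_wrt (\<lambda>xs ys. set xs \<inter> set ys = {}) xss"
  by (induct xss) auto

lemma count_concat_sorted_wrt_disjoint:
  assumes "sorted_wrt (\<lambda>u v. set u \<inter> set v = {}) us" "u \<in> set us" "a \<in> set u"
  shows "count (mset (concat us)) a = count (mset u) a"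
  using assms
proof (induct us)
  case (Cons v us)
  show ?case
  proof (cases "u = v")
    case True
    with Cons.prems have "a \<notin> set (concat us)"
      by auto
    with True show ?thesis
      by simp
  next
    case False
    with Cons.prems have "a \<notin> set v" "u \<in> set us"
      by auto
    with Cons show ?thesis
      by simp
  qed
qed simp

lemma append_Cons_eq_append_Cons_iff:
  "b \<notin> set u \<Longrightarrow> b \<notin> set v \<Longrightarrow> u @ b # r = v @ b # r' \<longleftrightarrow> u = v \<and> r = r'"
proof (induct u arbitrary: v)
  case Nil
  then show ?case by (cases v) auto
next
  case (Cons x u)
  then show ?case by (cases v) auto
qed

section \<open>Avoiding the pattern abab\<close>

definition avoids_abab :: "'a list \<Rightarrow> bool" where
  "avoids_abab w \<longleftrightarrow> (\<forall>a c. a \<noteq> c \<longrightarrow> \<not> subseq [a, c, a, c] w)"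

lemma subseq_Cons_iff_nth:
  "subseq (x # xs) ys \<longleftrightarrow> (\<exists>i < length ys. ys ! i = x \<and> subseq xs (drop (Suc i) ys))"
proof
  assume "subseq (x # xs) ys"
  then obtain us vs where "ys = us @ x # vs" "subseq xs vs"
    by (auto dest: list_emb_ConsD)
  then show "\<exists>i < length ys. ys ! i = x \<and> subseq xs (drop (Suc i) ys)"
    by (intro exI[of _ "length us"]) auto
next
  assume "\<exists>i < length ys. ys ! i = x \<and> subseq xs (drop (Suc i) ys)"
  then obtain i where "i < length ys" "ys ! i = x" "subseq xs (drop (Suc i) ys)"
    by blast
  then have "subseq ([] @ x # xs) (take i ys @ ys ! i # drop (Suc i) ys)"
    by (intro list_emb_append_mono) auto
  then show "subseq (x # xs) ys"
    using id_take_nth_drop[OF \<open>i < length ys\<close>] by simp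
qed

lemma subseq_Cons_drop_iff_nth:
  "subseq (x # xs) (drop n ys) \<longleftrightarrow>
     (\<exists>i. n \<le> i \<and> i < length ys \<and> ys ! i = x \<and> subseq xs (drop (Suc i) ys))"
  unfolding subseq_Cons_iff_nth
proof safe
  fix i assume "i < length (drop n ys)" "subseq xs (drop (Suc i) (drop n ys))"
  then show "\<exists>j\<ge>n. j < length ys \<and> ys ! j = drop n ys ! i \<and> subseq xs (drop (Suc j) ys)"
    by (intro exI[of _ "n + i"]) (auto simp: add.commute)
next
  fix j assume "n \<le> j" "j < length ys" "x = ys ! j" "subseq xs (drop (Suc j) ys)"
  then show "\<exists>i<length (drop n ys). drop n ys ! i = ys ! j \<and> subseq xs (drop (Suc i) (drop n ys))"
    by (intro exI[of _ "j - n"]) (auto simp: Suc_diff_le)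
qed

lemma subseq_abab_iff_nth:
  "subseq [a, c, a, c] w \<longleftrightarrow> (\<exists>i j l m. i < j \<and> j < l \<and> l < m \<and> m < length w \<and>
                                 w ! i = a \<and> w ! j = c \<and> w ! l = a \<and> w ! m = c)"
proof -
  have "subseq [a, c, a, c] w \<longleftrightarrow> subseq [a, c, a, c] (drop 0 w)"
    by simp
  also have "\<dots> \<longleftrightarrow> (\<exists>i\<ge>0. i < length w \<and> w ! i = a \<and> (\<exists>j\<ge>Suc i. j < length w \<and> w ! j = c \<and>
      (\<exists>l\<ge>Suc j. l < length w \<and> w ! l = a \<and> (\<exists>m\<ge>Suc l. m < length w \<and> w ! m = c))))"
    (is "_ \<longleftrightarrow> ?nested")
    by (simp only: subseq_Cons_drop_iff_nth list_emb_Nil simp_thms)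
  also have "\<dots> \<longleftrightarrow> (\<exists>i j l m. i < j \<and> j < l \<and> l < m \<and> m < length w \<and>
                                 w ! i = a \<and> w ! j = c \<and> w ! l = a \<and> w ! m = c)"
    (is "_ \<longleftrightarrow> ?flat")
  proof
    assume ?nested
    then obtain i j l m where "i < j" "j < l" "l < m" "m < length w"
        "w ! i = a" "w ! j = c" "w ! l = a" "w ! m = c"
      by (auto simp: Suc_le_eq)
    then show ?flat
      by blast
  next
    assume ?flat
    then obtain i j l m where "Suc i \<le> j" "Suc j \<le> l" "Suc l \<le> m" "m < length w"
        "w ! i = a" "w ! j = c" "w ! l = a" "w ! m = c"
      by (auto simp: Suc_le_eq)
    moreover from this have "i < length w" "j < length w" "l < length w"
      by linarith+
    ultimately show ?nested
      by blast
  qed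
  finally show ?thesis .
qed

lemma avoids_abab_iff_nth:
  "avoids_abab w \<longleftrightarrow> \<not> (\<exists>i j l m. i < j \<and> j < l \<and> l < m \<and> m < length w \<and>
                          w ! i = w ! l \<and> w ! j = w ! m \<and> w ! i \<noteq> w ! j)"
  unfolding avoids_abab_def subseq_abab_iff_nth
proof (intro iffI notI allI impI)
  assume H: "\<forall>a c. a \<noteq> c \<longrightarrow> \<not> (\<exists>i j l m. i < j \<and> j < l \<and> l < m \<and> m < length w \<and>
                                   w ! i = a \<and> w ! j = c \<and> w ! l = a \<and> w ! m = c)"
  assume "\<exists>i j l m. i < j \<and> j < l \<and> l < m \<and> m < length w \<and>
                   w ! i = w ! l \<and> w ! j = w ! m \<and> w ! i \<noteq> w ! j"
  then obtain i j l m where "i < j" "j < l" "l < m" "m < length w"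
      "w ! i = w ! l" "w ! j = w ! m" "w ! i \<noteq> w ! j"
    by blast
  then have "\<exists>i' j' l' m'. i' < j' \<and> j' < l' \<and> l' < m' \<and> m' < length w \<and>
      w ! i' = w ! i \<and> w ! j' = w ! j \<and> w ! l' = w ! i \<and> w ! m' = w ! j"
    by (intro exI[of _ i] exI[of _ j] exI[of _ l] exI[of _ m]) simp
  with H[rule_format, OF \<open>w ! i \<noteq> w ! j\<close>] show False
    by (rule notE)
next
  fix a c :: 'a
  assume H: "\<not> (\<exists>i j l m. i < j \<and> j < l \<and> l < m \<and> m < length w \<and>
                   w ! i = w ! l \<and> w ! j = w ! m \<and> w ! i \<noteq> w ! j)" and "a \<noteq> c"
  assume "\<exists>i j l m. i < j \<and> j < l \<and> l < m \<and> m < length w \<and>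
                   w ! i = a \<and> w ! j = c \<and> w ! l = a \<and> w ! m = c"
  then obtain i j l m where "i < j" "j < l" "l < m" "m < length w"
      "w ! i = a" "w ! j = c" "w ! l = a" "w ! m = c"
    by blast
  with \<open>a \<noteq> c\<close> have "i < j \<and> j < l \<and> l < m \<and> m < length w \<and>
      w ! i = w ! l \<and> w ! j = w ! m \<and> w ! i \<noteq> w ! j"
    by simp
  with H show False
    by blast
qed

lemma set_subseq_subset: "subseq xs ys \<Longrightarrow> set xs \<subseteq> set ys"
  by (induct rule: list_emb.induct) auto

lemma avoids_abab_subseq: "subseq v w \<Longrightarrow> avoids_abab w \<Longrightarrow> avoids_abab v"
  unfolding avoids_abab_def using subseq_order.order_trans by blast

lemma avoids_abab_appendD:
  assumes "avoids_abab (xs @ ys)"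
  shows "avoids_abab xs" "avoids_abab ys"
  using assms by (auto intro: avoids_abab_subseq)

lemma not_subseq_cbc_append:
  assumes "set xs \<inter> set ys \<subseteq> {b}" "c \<noteq> b"
    and "\<not> subseq [c, b, c] xs" "\<not> subseq [c, b, c] ys"
  shows "\<not> subseq [c, b, c] (xs @ ys)"
proof
  assume "subseq [c, b, c] (xs @ ys)"
  then obtain p q where pq: "[c, b, c] = p @ q" "subseq p xs" "subseq q ys"
    by (auto elim: subseq_appendE)
  have "p = [] \<or> p = [c] \<or> p = [c, b] \<or> p = [c, b, c]"
    using pq(1) by (auto simp: Cons_eq_append_conv)
  then show False
  proof (elim disjE)
    assume "p = [c]"
    then show False using pq assms(1,2) by (auto dest!: set_subseq_subset)
  next
    assume "p = [c, b]"
    then show False using pq assms(1,2) by (auto dest!: set_subseq_subset)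
  qed (use pq assms(3,4) in auto)
qed

lemma avoids_abab_append:
  assumes "avoids_abab xs" "avoids_abab ys" "set xs \<inter> set ys \<subseteq> {b}"
    and "\<And>c. c \<noteq> b \<Longrightarrow> \<not> subseq [c, b, c] xs" "\<And>c. c \<noteq> b \<Longrightarrow> \<not> subseq [c, b, c] ys"
  shows "avoids_abab (xs @ ys)"
  unfolding avoids_abab_def
proof (intro allI impI notI)
  fix a c assume "a \<noteq> c" "subseq [a, c, a, c] (xs @ ys)"
  then obtain p q where pq: "[a, c, a, c] = p @ q" "subseq p xs" "subseq q ys"
    by (auto elim: subseq_appendE)
  have "p = [] \<or> p = [a] \<or> p = [a, c] \<or> p = [a, c, a] \<or> p = [a, c, a, c]"
    using pq(1) by (auto simp: Cons_eq_append_conv)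
  then show False
  proof (elim disjE)
    assume "p = [a]"
    then have "a = b" "subseq [c, a, c] ys"
      using pq assms(3) by (auto dest!: set_subseq_subset)
    then show False using assms(5) \<open>a \<noteq> c\<close> by auto
  next
    assume "p = [a, c]"
    then have "a = b" "c = b"
      using pq assms(3) by (auto dest!: set_subseq_subset)
    then show False using \<open>a \<noteq> c\<close> by simp
  next
    assume "p = [a, c, a]"
    then have "c = b" "subseq [a, c, a] xs"
      using pq assms(3) by (auto dest!: set_subseq_subset)
    then show False using assms(4) \<open>a \<noteq> c\<close> by auto
  qed (use pq assms(1,2) \<open>a \<noteq> c\<close> in \<open>auto simp: avoids_abab_def\<close>)
qed

section \<open>Concatenation of blocks terminated by a separator\<close>

definition concat_terminated :: "'a \<Rightarrow> 'a list list \<Rightarrow> 'a list" where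
  "concat_terminated b us = concat (map (\<lambda>u. u @ [b]) us)"

lemma concat_terminated_Nil [simp]: "concat_terminated b [] = []"
  and concat_terminated_Cons [simp]:
    "concat_terminated b (u # us) = u @ b # concat_terminated b us"
  by (simp_all add: concat_terminated_def)

lemma concat_terminated_eq_Nil_iff [simp]: "concat_terminated b us = [] \<longleftrightarrow> us = []"
  by (cases us) auto

lemma concat_terminated_append [simp]:
  "concat_terminated b (us @ vs) = concat_terminated b us @ concat_terminated b vs"
  by (simp add: concat_terminated_def)

lemma set_concat_terminated:
  "set (concat_terminated b us) = set (concat us) \<union> (if us = [] then {} else {b})"
  by (induct us) auto

lemma count_concat_terminated:
  "count (mset (concat_terminated b us)) a =
     count (mset (concat us)) a + (if a = b then length us else 0)"
  by (induct us) auto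

lemma last_concat_terminated: "us \<noteq> [] \<Longrightarrow> last (concat_terminated b us) = b"
  by (induct us) auto

lemma length_lt_concat_terminated: "u \<in> set us \<Longrightarrow> length u < length (concat_terminated b us)"
  by (induct us) auto

lemma concat_terminated_inject:
  assumes "\<forall>u\<in>set us. b \<notin> set u" "\<forall>v\<in>set vs. b \<notin> set v"
    and "concat_terminated b us = concat_terminated b vs"
  shows "us = vs"
  using assms
proof (induct us arbitrary: vs)
  case Nil
  then show ?case by (cases vs) auto
next
  case (Cons u us)
  obtain v vs' where vs: "vs = v # vs'"
    using Cons.prems(3) by (cases vs) auto
  have "u @ b # concat_terminated b us = v @ b # concat_terminated b vs'"
    using Cons.prems(3) unfolding vs by simp
  moreover have "b \<notin> set u" "b \<notin> set v"
    using Cons.prems(1,2) unfolding vs by auto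
  ultimately have "u = v" "concat_terminated b us = concat_terminated b vs'"
    by (simp_all add: append_Cons_eq_append_Cons_iff)
  moreover have "us = vs'"
    using Cons.hyps[of vs'] Cons.prems(1,2) \<open>concat_terminated b us = concat_terminated b vs'\<close>
    unfolding vs by (meson list.set_intros(2))
  ultimately show ?case
    unfolding vs by simp
qed

lemma avoids_abab_concat_terminated:
  assumes "\<forall>u\<in>set us. avoids_abab u \<and> b \<notin> set u"
    and "sorted_wrt (\<lambda>u v. set u \<inter> set v = {}) us"
  shows "avoids_abab (concat_terminated b us)"
proof -
  have "avoids_abab (concat_terminated b us) \<and>
    (\<forall>c. c \<noteq> b \<longrightarrow> \<not> subseq [c, b, c] (concat_terminated b us))"
    using assms
  proof (induct us)
    case Nil
    then show ?case by (simp add: avoids_abab_def)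
  next
    case (Cons u us)
    have u: "avoids_abab u" "b \<notin> set u"
      using Cons.prems(1) by auto
    have no_cbc_u: "\<not> subseq [c, b, c] u" for c
      using u(2) by (auto dest: set_subseq_subset)
    have no_cbc_b: "\<not> subseq [c, b, c] [b]" for c
      by (auto dest: list_emb_length)
    have "avoids_abab [b]"
      by (auto simp: avoids_abab_def dest: list_emb_length)
    then have block: "avoids_abab (u @ [b])"
      using avoids_abab_append[of u "[b]" b] u no_cbc_u no_cbc_b by auto
    have no_cbc_block: "\<not> subseq [c, b, c] (u @ [b])" if "c \<noteq> b" for c
      using not_subseq_cbc_append[of u "[b]" b c] u(2) that no_cbc_u no_cbc_b by auto
    have "set (u @ [b]) \<inter> set (concat_terminated b us) \<subseteq> {b}"
      using Cons.prems(2) by (auto simp: set_concat_terminated)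
    moreover have "avoids_abab (concat_terminated b us)"
      "\<And>c. c \<noteq> b \<Longrightarrow> \<not> subseq [c, b, c] (concat_terminated b us)"
      using Cons by auto
    ultimately show ?case
      using avoids_abab_append[OF block] not_subseq_cbc_append[of "u @ [b]"] no_cbc_block
      by simp
  qed
  then show ?thesis ..
qed

lemma concat_terminated_split:
  "\<exists>us r. w = concat_terminated b us @ r \<and> b \<notin> set r \<and> (\<forall>u\<in>set us. b \<notin> set u)"
proof (induct w rule: rev_induct)
  case Nil
  show ?case by (intro exI[of _ "[]"]) simp
next
  case (snoc x w)
  then obtain us r where w: "w = concat_terminated b us @ r" "b \<notin> set r" "\<forall>u\<in>set us. b \<notin> set u"
    by blast
  show ?case
  proof (cases "x = b")
    case True
    with w show ?thesis by (intro exI[of _ "us @ [r]"] exI[of _ "[]"]) auto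
  next
    case False
    with w show ?thesis by (intro exI[of _ us] exI[of _ "r @ [x]"]) auto
  qed
qed

lemma concat_terminated_split_last:
  assumes "w \<noteq> []"
  obtains us where "w = concat_terminated (last w) us" "\<forall>u\<in>set us. last w \<notin> set u"
proof -
  define b where "b = last w"
  obtain us r where w: "w = concat_terminated b us @ r" "b \<notin> set r" "\<forall>u\<in>set us. b \<notin> set u"
    using concat_terminated_split[of w b] by (elim exE conjE)
  have "r = []"
  proof (rule ccontr)
    assume "r \<noteq> []"
    then have "last w = last r"
      using w(1) by simp
    with \<open>r \<noteq> []\<close> w(2) show False
      unfolding b_def by simp
  qed
  with w(1) have "w = concat_terminated b us"
    by simp
  with w(3) show thesis
    using that unfolding b_def by blast
qed

lemma subseq_concat_terminated:
  "a \<in> set (concat us) \<Longrightarrow> subseq [a, b] (concat_terminated b us)"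
proof (induct us)
  case (Cons u us)
  show ?case
  proof (cases "a \<in> set u")
    case True
    then have "subseq ([a] @ [b]) (u @ b # concat_terminated b us)"
      by (intro list_emb_append_mono) (simp_all add: subseq_singleton_left)
    then show ?thesis
      by simp
  next
    case False
    with Cons show ?thesis
      by (auto intro: subseq_drop_many)
  qed
qed simp

lemma sorted_wrt_disjoint_if_avoids_abab:
  assumes "avoids_abab (concat_terminated b us)" "\<forall>u\<in>set us. b \<notin> set u"
  shows "sorted_wrt (\<lambda>u v. set u \<inter> set v = {}) us"
  using assms
proof (induct us)
  case (Cons u us)
  have "set u \<inter> set v = {}" if v: "v \<in> set us" for v
  proof (rule ccontr)
    assume "set u \<inter> set v \<noteq> {}"
    then obtain a where "a \<in> set u" "a \<in> set (concat us)"
      using v by auto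
    then have "subseq ([a] @ [b, a, b]) (u @ b # concat_terminated b us)"
      by (intro list_emb_append_mono) (simp_all add: subseq_singleton_left subseq_concat_terminated)
    moreover have "a \<noteq> b"
      using Cons.prems(2) \<open>a \<in> set u\<close> by auto
    ultimately show False
      using Cons.prems(1) by (auto simp: avoids_abab_def)
  qed
  moreover have "avoids_abab (concat_terminated b us)"
    using Cons.prems(1) avoids_abab_appendD(2)[of "u @ [b]"] by simp
  ultimately show ?case
    using Cons by simp
qed simp

section \<open>Quasi-Stirling words\<close>

definition quasi_stirling_word :: "nat \<Rightarrow> 'a list \<Rightarrow> bool" where
  "quasi_stirling_word k w \<longleftrightarrow> (\<forall>a\<in>set w. count (mset w) a = k) \<and> avoids_abab w"

lemma quasi_stirling_word_blocks:
  assumes "quasi_stirling_word k (concat_terminated b us)" "\<forall>u\<in>set us. b \<notin> set u"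
  shows "sorted_wrt (\<lambda>u v. set u \<inter> set v = {}) us"
    and "\<forall>u\<in>set us. quasi_stirling_word k u"
    and "us \<noteq> [] \<Longrightarrow> length us = k"
proof -
  have avoids: "avoids_abab (concat_terminated b us)"
    using assms(1) by (simp add: quasi_stirling_word_def)
  then show disjoint: "sorted_wrt (\<lambda>u v. set u \<inter> set v = {}) us"
    using assms(2) by (rule sorted_wrt_disjoint_if_avoids_abab)
  have b: "b \<notin> set (concat us)"
    using assms(2) by simp
  show "\<forall>u\<in>set us. quasi_stirling_word k u"
  proof (intro ballI)
    fix u assume u: "u \<in> set us"
    have "subseq u (concat_terminated b us)"
      using u by (induct us) (auto intro: subseq_drop_many subseq_rev_drop_many)
    then have "avoids_abab u"
      using avoids avoids_abab_subseq by blast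
    moreover have "count (mset u) a = k" if "a \<in> set u" for a
    proof -
      have "a \<noteq> b" "a \<in> set (concat_terminated b us)"
        using u that assms(2) by (auto simp: set_concat_terminated)
      then have "count (mset (concat_terminated b us)) a = k"
        using assms(1) by (simp add: quasi_stirling_word_def)
      then show ?thesis
        using \<open>a \<noteq> b\<close> count_concat_sorted_wrt_disjoint[OF disjoint u that]
        by (simp add: count_concat_terminated)
    qed
    ultimately show "quasi_stirling_word k u"
      by (simp add: quasi_stirling_word_def)
  qed
  assume "us \<noteq> []"
  then have "b \<in> set (concat_terminated b us)"
    by (simp add: set_concat_terminated)
  then have "count (mset (concat_terminated b us)) b = k"
    using assms(1) by (simp add: quasi_stirling_word_def)
  moreover have "count (mset (concat us)) b = 0"
    using b by simp
  ultimately show "length us = k"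
    by (simp add: count_concat_terminated)
qed

lemma quasi_stirling_iff:
  assumes "k \<ge> 1"
  shows "w \<in> quasi_stirling k n \<longleftrightarrow> quasi_stirling_word k w \<and> set w = {1..n}"
proof -
  have "(\<forall>a. count (mset w) a = (if a \<in> {1..n} then k else 0)) \<longleftrightarrow>
      (\<forall>a\<in>set w. count (mset w) a = k) \<and> set w = {1..n}"
  proof
    assume count: "\<forall>a. count (mset w) a = (if a \<in> {1..n} then k else 0)"
    have "a \<in> set w \<longleftrightarrow> a \<in> {1..n}" for a
      using count_mset_0_iff[of w a] count assms by (cases "a \<in> {1..n}") auto
    with count show "(\<forall>a\<in>set w. count (mset w) a = k) \<and> set w = {1..n}"
      by auto
  next
    assume "(\<forall>a\<in>set w. count (mset w) a = k) \<and> set w = {1..n}"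
    then show "\<forall>a. count (mset w) a = (if a \<in> {1..n} then k else 0)"
      using count_mset_0_iff[of w] by auto
  qed
  then show ?thesis
    unfolding quasi_stirling_def quasi_stirling_word_def avoids_abab_iff_nth atLeastAtMost_iff
    by blast
qed

section \<open>The map psi\<close>

lemma psi_Node_concat_terminated: "psi (Node b ts) = concat_terminated b (map psi ts)"
  by (simp add: concat_terminated_def comp_def)

lemma psi_eq_Nil_iff: "k \<ge> 1 \<Longrightarrow> is_kary k T \<Longrightarrow> psi T = [] \<longleftrightarrow> T = Leaf"
  by (cases T) (auto simp: psi_Node_concat_terminated)

lemma set_psi_subset: "set (psi T) \<subseteq> set (labels T)"
  by (induct T) auto

lemma count_psi: "is_kary k T \<Longrightarrow> count (mset (psi T)) a = k * count (mset (labels T)) a"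
proof (induct T)
  case (Node b ts)
  have "count (mset (psi (Node b ts))) a =
      (\<Sum>t\<leftarrow>ts. count (mset (psi t)) a) + (if a = b then length ts else 0)"
    unfolding psi_Node_concat_terminated count_concat_terminated count_mset_concat
    by (simp add: o_def)
  also have "\<dots> = (\<Sum>t\<leftarrow>ts. k * count (mset (labels t)) a) + (if a = b then k else 0)"
    using Node by (auto intro!: arg_cong[where f = sum_list] map_cong)
  also have "\<dots> = k * count (mset (labels (Node b ts))) a"
    by (simp add: count_mset_concat sum_list_const_mult o_def)
  finally show ?case .
qed simp

lemma set_psi:
  assumes "k \<ge> 1" "is_kary k T"
  shows "set (psi T) = set (labels T)"
proof -
  have "count (mset (psi T)) a = 0 \<longleftrightarrow> count (mset (labels T)) a = 0" for a
    using count_psi[OF assms(2)] assms(1) by simp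
  then show ?thesis
    by auto
qed

lemma avoids_abab_psi: "distinct (labels T) \<Longrightarrow> avoids_abab (psi T)"
proof (induct T)
  case (Node b ts)
  have b: "\<forall>t\<in>set ts. b \<notin> set (labels t)"
    and disjoint: "sorted_wrt (\<lambda>t t'. set (labels t) \<inter> set (labels t') = {}) ts"
    and "\<forall>t\<in>set ts. distinct (labels t)"
    using Node.prems by (simp_all add: distinct_concat_iff_sorted_wrt sorted_wrt_map)
  then have "\<forall>u\<in>set (map psi ts). avoids_abab u \<and> b \<notin> set u"
    using Node.hyps set_psi_subset by fastforce
  moreover have "sorted_wrt (\<lambda>u v. set u \<inter> set v = {}) (map psi ts)"
    unfolding sorted_wrt_map using disjoint
    by (rule sorted_wrt_mono_rel[rotated]) (use set_psi_subset in blast)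
  ultimately show ?case
    unfolding psi_Node_concat_terminated by (rule avoids_abab_concat_terminated)
qed (simp add: avoids_abab_def)

lemma quasi_stirling_word_psi:
  assumes "k \<ge> 1" "is_kary k T" "distinct (labels T)"
  shows "quasi_stirling_word k (psi T)"
  unfolding quasi_stirling_word_def
proof
  show "\<forall>a\<in>set (psi T). count (mset (psi T)) a = k"
    using count_psi[OF assms(2)] set_psi_subset assms(3) by (auto simp: distinct_count_atmost_1)
  show "avoids_abab (psi T)"
    using assms(3) by (rule avoids_abab_psi)
qed

lemma psi_inject:
  assumes "k \<ge> 1" "is_kary k T" "distinct (labels T)" "is_kary k T'" "distinct (labels T')"
    and "psi T = psi T'"
  shows "T = T'"
  using assms(2-)
proof (induct T arbitrary: T')
  case Leaf
  then have "psi T' = []"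
    by simp
  then show ?case
    using psi_eq_Nil_iff[OF assms(1) Leaf.prems(3)] by simp
next
  case (Node b ts)
  then obtain b' ts' where T': "T' = Node b' ts'"
    using psi_eq_Nil_iff[OF assms(1)] assms(1) by (cases T') auto
  have "ts \<noteq> []" "ts' \<noteq> []"
    using Node.prems(1,3) assms(1) unfolding T' by auto
  then have "b = b'"
    using Node.prems(5) unfolding T' psi_Node_concat_terminated
    by (metis last_concat_terminated Nil_is_map_conv)
  have "map psi ts = map psi ts'"
  proof (rule concat_terminated_inject)
    show "\<forall>u\<in>set (map psi ts). b \<notin> set u" "\<forall>v\<in>set (map psi ts'). b \<notin> set v"
      using Node.prems(2,4) set_psi_subset unfolding T' \<open>b = b'\<close>
      by (fastforce simp: distinct_concat_iff_sorted_wrt)+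
    show "concat_terminated b (map psi ts) = concat_terminated b (map psi ts')"
      using Node.prems(5) unfolding T' \<open>b = b'\<close> psi_Node_concat_terminated .
  qed
  then have "ts = ts'"
    using Node.hyps Node.prems(1-4) unfolding T'
    by (auto simp: distinct_concat_iff_sorted_wrt elim!: list.inj_map_strong[rotated])
  then show ?case
    unfolding T' \<open>b = b'\<close> by simp
qed

lemma psi_Node_map:
  assumes "\<forall>u\<in>set us. is_kary k (f u) \<and> distinct (labels (f u)) \<and> psi (f u) = u"
    and "k \<ge> 1" "length us = k" "\<forall>u\<in>set us. b \<notin> set u"
    and "sorted_wrt (\<lambda>u v. set u \<inter> set v = {}) us"
  shows "is_kary k (Node b (map f us))" "distinct (labels (Node b (map f us)))"
    and "psi (Node b (map f us)) = concat_terminated b us"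
proof -
  have labels_f: "set (labels (f u)) = set u" if "u \<in> set us" for u
    using assms(1) set_psi[OF assms(2)] that by force
  show "is_kary k (Node b (map f us))"
    using assms(1,3) by simp
  show "distinct (labels (Node b (map f us)))"
    using assms(1,4,5) labels_f
    by (auto simp: distinct_concat_iff_sorted_wrt sorted_wrt_map elim!: sorted_wrt_mono_rel[rotated])
  show "psi (Node b (map f us)) = concat_terminated b us"
    using assms(1) unfolding psi_Node_concat_terminated by (simp add: map_idI)
qed

lemma ex_kary_tree_psi_eq:
  assumes "k \<ge> 1" "quasi_stirling_word k w"
  shows "\<exists>T. is_kary k T \<and> distinct (labels T) \<and> psi T = w"
  using assms(2)
proof (induct "length w" arbitrary: w rule: less_induct)
  case less
  show ?case
  proof (cases "w = []")
    case True
    then show ?thesis by (intro exI[of _ Leaf]) simp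
  next
    case False
    define b where "b = last w"
    obtain us where w: "w = concat_terminated b us" and b: "\<forall>u\<in>set us. b \<notin> set u"
      using concat_terminated_split_last[OF False] unfolding b_def by blast
    have "us \<noteq> []"
      using False w by simp
    note blocks = quasi_stirling_word_blocks[OF less.prems[unfolded w] b]
    have "\<forall>u\<in>set us. \<exists>t. is_kary k t \<and> distinct (labels t) \<and> psi t = u"
    proof
      fix u assume "u \<in> set us"
      then have "length u < length w" "quasi_stirling_word k u"
        using blocks(2) length_lt_concat_terminated unfolding w by auto
      then show "\<exists>t. is_kary k t \<and> distinct (labels t) \<and> psi t = u"
        by (rule less.hyps)
    qed
    then obtain f where "\<forall>u\<in>set us. is_kary k (f u) \<and> distinct (labels (f u)) \<and> psi (f u) = u"
      by (auto dest!: bchoice)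
    from psi_Node_map[OF this assms(1) blocks(3)[OF \<open>us \<noteq> []\<close>] b blocks(1)] show ?thesis
      unfolding w by blast
  qed
qed

theorem theorem4p1:
  fixes k n :: nat
  assumes "k \<ge> 1"
  shows "bij_betw psi (labeled_kary_trees k n) (quasi_stirling k n)"
proof (rule bij_betw_imageI)
  show "inj_on psi (labeled_kary_trees k n)"
    using psi_inject[OF assms] by (auto simp: inj_on_def labeled_kary_trees_def)
  show "psi ` labeled_kary_trees k n = quasi_stirling k n"
  proof (intro equalityI subsetI)
    fix w assume "w \<in> psi ` labeled_kary_trees k n"
    then show "w \<in> quasi_stirling k n"
      using assms quasi_stirling_word_psi set_psi
      by (auto simp: quasi_stirling_iff labeled_kary_trees_def)
  next
    fix w assume "w \<in> quasi_stirling k n"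
    then obtain T where "is_kary k T" "distinct (labels T)" "psi T = w" "set w = {1..n}"
      using ex_kary_tree_psi_eq[OF assms] by (auto simp: quasi_stirling_iff[OF assms])
    then show "w \<in> psi ` labeled_kary_trees k n"
      using set_psi[OF assms] by (auto simp: labeled_kary_trees_def)
  qed
qed

end
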